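(* Let $\mathbb G=V_1\times V_2$ be a step-two Carnot group with $\mathcal A_h(\mathbb G)=\mathcal A(V_1\times V_2)$. Then $\mathcal A_h(\mathbb G')=\mathcal A(V_1'\times V_2')$ for every step-two Carnot group $\mathbb G'=V_1'\times V_2'$ that is a proper quotient of $\mathbb G$.
   Context: A step-two Carnot group is $\mathbb G=V_1\times V_2$ ($V_1,V_2$ finite-dimensional real vector spaces, $V_2\ne\{0\}$) with a bilinear skew-symmetric $[\cdot,\cdot]:V_1\times V_1\to V_2$ whose image spans $V_2$, and group law $(x,z)\cdot(x',z')=(x+x',z+z'+[x,x'])$. $\mathcal A_h(\mathbb G)$ is the space of maps $f:\mathbb G\to\mathbb R$ such that for all $(x,z)\in\mathbb G$, $y\in V_1$, $t\mapsto f((x,z)\cdot(ty,0))$ is affine; $\mathcal A(W)$ is the space of maps affine in the usual sense on a vector space $W$. A Carnot morphism $\pi:\mathbb G\to\mathbb G'$ is $\pi(x,z)=(\pi_1(x),\pi_2(z))$ with $\pi_1:V_1\to V_1'$, $\pi_2:V_2\to V_2'$ linear and $\pi_2([x,y])=[\pi_1(x),\pi_1(y)]'$. $\mathbb G'$ is a proper quotient of $\mathbb G$ if there is a surjective Carnot morphism $\pi:\mathbb G\to\mathbb G'$ with $\ker\pi\ne\{(0,0)\}$. *)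

theory Defs
  imports "HOL-Analysis.Analysis"
begin

text \<open>Step-two Carnot group structure on V1 x V2 given by a bracket
  br : V1 x V1 -> V2 (bilinear, skew-symmetric, image spanning V2).
  V1, V2 are finite-dimensional real vector spaces, modelled as types of
  class euclidean_space (which forces V2 to be nonzero).\<close>

definition carnot2 :: "('a::euclidean_space \<Rightarrow> 'a \<Rightarrow> 'b::euclidean_space) \<Rightarrow> bool" where
  "carnot2 br \<longleftrightarrow> bilinear br \<and> (\<forall>x y. br x y = - br y x)
     \<and> span (range (\<lambda>(x, y). br x y)) = UNIV"

definition cmul :: "('a::real_vector \<Rightarrow> 'a \<Rightarrow> 'b::real_vector) \<Rightarrow> 'a \<times> 'b \<Rightarrow> 'a \<times> 'b \<Rightarrow> 'a \<times> 'b" where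
  "cmul br p q = (fst p + fst q, snd p + snd q + br (fst p) (fst q))"

definition affine_map :: "('v::real_vector \<Rightarrow> real) \<Rightarrow> bool" where
  "affine_map f \<longleftrightarrow> (\<exists>l c. linear l \<and> (\<forall>v. f v = l v + c))"

definition A_h :: "('a::real_vector \<Rightarrow> 'a \<Rightarrow> 'b::real_vector) \<Rightarrow> ('a \<times> 'b \<Rightarrow> real) set" where
  "A_h br = {f. \<forall>p y. affine_map (\<lambda>t::real. f (cmul br p (t *\<^sub>R y, 0)))}"

definition A_aff :: "('v::real_vector \<Rightarrow> real) set" where
  "A_aff = {f. affine_map f}"

definition carnot_morphism ::
  "('a::real_vector \<Rightarrow> 'a \<Rightarrow> 'b::real_vector) \<Rightarrow> ('c::real_vector \<Rightarrow> 'c \<Rightarrow> 'd::real_vector)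
    \<Rightarrow> ('a \<Rightarrow> 'c) \<Rightarrow> ('b \<Rightarrow> 'd) \<Rightarrow> bool" where
  "carnot_morphism br br' \<pi>1 \<pi>2 \<longleftrightarrow> linear \<pi>1 \<and> linear \<pi>2
     \<and> (\<forall>x y. \<pi>2 (br x y) = br' (\<pi>1 x) (\<pi>1 y))"

definition proper_quotient ::
  "('a::real_vector \<Rightarrow> 'a \<Rightarrow> 'b::real_vector) \<Rightarrow> ('c::real_vector \<Rightarrow> 'c \<Rightarrow> 'd::real_vector) \<Rightarrow> bool" where
  "proper_quotient br br' \<longleftrightarrow> (\<exists>\<pi>1 \<pi>2. carnot_morphism br br' \<pi>1 \<pi>2
     \<and> surj (\<lambda>(x, z). (\<pi>1 x, \<pi>2 z))
     \<and> (\<exists>x z. (x, z) \<noteq> (0, 0) \<and> \<pi>1 x = 0 \<and> \<pi>2 z = 0))"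

end

theory Submission
  imports Defs
begin

text \<open>An affine map is affine along every line; for the group law of \<open>cmul\<close> the horizontal line
  through \<open>p\<close> in direction \<open>y\<close> is the affine line through \<open>p\<close> in direction \<open>(y, br (fst p) y)\<close>,
  so \<open>A_aff \<subseteq> A_h br\<close>. Conversely, a surjective Carnot morphism \<open>\<pi>\<close> maps horizontal lines to
  horizontal lines, so for \<open>f \<in> A_h br'\<close> the pullback \<open>f \<circ> \<pi>\<close> lies in \<open>A_h br = A_aff\<close>.
  As \<open>\<pi>\<close> is a linear surjection it has a linear right inverse \<open>\<sigma>\<close>, and \<open>f = (f \<circ> \<pi>) \<circ> \<sigma>\<close> is
  affine.\<close>

lemma affine_map_compose_affine:
  assumes "affine_map f" and "linear g"
  shows "affine_map (\<lambda>v. f (a + g v))"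
proof -
  from assms(1) obtain l c where "linear l" and f: "\<And>v. f v = l v + c"
    unfolding affine_map_def by blast
  have "\<And>v. f (a + g v) = (l \<circ> g) v + (l a + c)"
    using \<open>linear l\<close> by (simp add: f linear_add)
  moreover have "linear (l \<circ> g)"
    using assms(2) \<open>linear l\<close> by (rule linear_compose)
  ultimately show ?thesis
    unfolding affine_map_def by blast
qed

lemma affine_map_on_line:
  assumes "affine_map f"
  shows "affine_map (\<lambda>t::real. f (a + t *\<^sub>R b))"
  using affine_map_compose_affine[OF assms linear_scaleR_left] .

lemma affine_map_of_surjective_linear:
  assumes "linear P" and "surj P" and "affine_map (f \<circ> P)"
  shows "affine_map f"
proof -
  obtain \<sigma> where "linear \<sigma>" and P\<sigma>: "P \<circ> \<sigma> = id"
    using linear_surjective_right_inverse[OF assms(1,2)] by blast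
  have "affine_map (\<lambda>w. (f \<circ> P) (0 + \<sigma> w))"
    using assms(3) \<open>linear \<sigma>\<close> by (rule affine_map_compose_affine)
  moreover have "(\<lambda>w. (f \<circ> P) (0 + \<sigma> w)) = f"
    using P\<sigma> by (simp add: fun_eq_iff pointfree_idE)
  ultimately show ?thesis
    by simp
qed

lemma cmul_horizontal:
  assumes "bilinear br"
  shows "cmul br p (t *\<^sub>R y, 0) = p + t *\<^sub>R (y, br (fst p) y)"
  using assms by (simp add: cmul_def bilinear_rmul prod_eq_iff)

lemma A_aff_subset_A_h:
  assumes "bilinear br"
  shows "A_aff \<subseteq> A_h br"
proof
  fix f :: "'a \<times> 'b \<Rightarrow> real"
  assume "f \<in> A_aff"
  then have "affine_map (\<lambda>t::real. f (p + t *\<^sub>R (y, br (fst p) y)))" for p y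
    using affine_map_on_line unfolding A_aff_def by blast
  then show "f \<in> A_h br"
    unfolding A_h_def cmul_horizontal[OF assms] by blast
qed

lemma carnot_morphism_cmul:
  assumes "carnot_morphism br br' \<pi>1 \<pi>2"
  shows "map_prod \<pi>1 \<pi>2 (cmul br p q) = cmul br' (map_prod \<pi>1 \<pi>2 p) (map_prod \<pi>1 \<pi>2 q)"
  using assms unfolding carnot_morphism_def
  by (simp add: cmul_def map_prod_def case_prod_beta linear_add)

lemma linear_map_prod:
  assumes "linear f" and "linear g"
  shows "linear (map_prod f g)"
  by (rule linearI)
    (simp_all add: map_prod_def case_prod_beta linear_add[OF assms(1)] linear_add[OF assms(2)]
      linear_scale[OF assms(1)] linear_scale[OF assms(2)])

lemma A_h_pullback:
  assumes "carnot_morphism br br' \<pi>1 \<pi>2" and "f \<in> A_h br'"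
  shows "f \<circ> map_prod \<pi>1 \<pi>2 \<in> A_h br"
proof -
  have "map_prod \<pi>1 \<pi>2 (t *\<^sub>R y, 0) = (t *\<^sub>R \<pi>1 y, 0)" for t y
    using assms(1) unfolding carnot_morphism_def by (simp add: linear_scale linear_0)
  then show ?thesis
    using assms(2) unfolding A_h_def by (simp add: carnot_morphism_cmul[OF assms(1)])
qed

lemma A_h_subset_A_aff_quotient:
  assumes "carnot_morphism br br' \<pi>1 \<pi>2" and "surj (map_prod \<pi>1 \<pi>2)"
    and "A_h br \<subseteq> A_aff"
  shows "A_h br' \<subseteq> A_aff"
proof
  fix f
  assume "f \<in> A_h br'"
  then have "affine_map (f \<circ> map_prod \<pi>1 \<pi>2)"
    using A_h_pullback[OF assms(1)] assms(3) unfolding A_aff_def by blast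
  moreover have "linear (map_prod \<pi>1 \<pi>2)"
    using assms(1) unfolding carnot_morphism_def by (simp add: linear_map_prod)
  ultimately show "f \<in> A_aff"
    using affine_map_of_surjective_linear assms(2) unfolding A_aff_def by blast
qed

theorem proposition6p5:
  fixes br :: "'a::euclidean_space \<Rightarrow> 'a \<Rightarrow> 'b::euclidean_space"
    and br' :: "'c::euclidean_space \<Rightarrow> 'c \<Rightarrow> 'd::euclidean_space"
  assumes "carnot2 br"
    and "A_h br = A_aff"
    and "carnot2 br'"
    and "proper_quotient br br'"
  shows "A_h br' = A_aff"
proof
  obtain \<pi>1 \<pi>2 where "carnot_morphism br br' \<pi>1 \<pi>2" and "surj (map_prod \<pi>1 \<pi>2)"
    using assms(4) unfolding proper_quotient_def map_prod_def by blast
  then show "A_h br' \<subseteq> A_aff"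
    using A_h_subset_A_aff_quotient assms(2) by blast
  show "A_aff \<subseteq> A_h br'"
    using assms(3) A_aff_subset_A_h unfolding carnot2_def by blast
qed

end
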